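(* Let $m,n\geq 2$ be integers, where any cycle $C_m$ or $C_n$ appearing below is assumed to have length at least $3$, and let $T_n$ ($T_m$) denote any tree of order $n$ ($m$). Then: 1. $C_{cc}(K_m\Box K_n)=\max\{m,n\}$. 2. $C_{cc}(K_m\Box C_n)=\max\{n,\ mn-2m\}$. 3. $C_{cc}(K_m\Box T_n)=\max\{n,\ mn-m\}$. 4. $C_{cc}(C_m\Box C_n)=\max\{mn-2n,\ mn-2m\}$. 5. $C_{cc}(C_m\Box T_n)=\max\{mn-2n,\ mn-m\}$. 6. $C_{cc}(T_m\Box T_n)=\max\{mn-n,\ mn-m\}$.
   Context: All graphs are finite, simple and undirected. $K_\ell$ is the complete graph, $C_\ell$ the cycle, of order $\ell$. For a graph $G$ and $S\subseteq V(G)$, the cycle interval $\langle S\rangle$ consists of the vertices of $S$ together with every vertex $w\in V(G)\setminus S$ such that $G[S\cup\{w\}]$ contains a cycle through $w$; $S$ is cycle convex if $\langle S\rangle=S$. The cycle convexity number $C_{cc}(G)$ is the maximum cardinality of a proper (i.e. $\neq V(G)$) cycle convex subset of $V(G)$. The Cartesian product $G\Box H$ has vertex set $V(G)\times V(H)$, with $(g_1,h_1)\sim(g_2,h_2)$ iff ($g_1\sim g_2$ and $h_1=h_2$) or ($g_1=g_2$ and $h_1\sim h_2$). *)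

theory Defs
  imports Main
begin

type_synonym 'a graph = "'a set \<times> ('a \<Rightarrow> 'a \<Rightarrow> bool)"

definition verts :: "'a graph \<Rightarrow> 'a set" where "verts G = fst G"
definition adj :: "'a graph \<Rightarrow> 'a \<Rightarrow> 'a \<Rightarrow> bool" where "adj G = snd G"

definition simple_graph :: "'a graph \<Rightarrow> bool" where
  "simple_graph G \<longleftrightarrow> finite (verts G) \<and>
     (\<forall>x y. adj G x y \<longrightarrow> x \<in> verts G \<and> y \<in> verts G \<and> x \<noteq> y \<and> adj G y x)"

definition is_cycle :: "'a graph \<Rightarrow> 'a list \<Rightarrow> bool" where
  "is_cycle G xs \<longleftrightarrow> length xs \<ge> 3 \<and> distinct xs \<and> set xs \<subseteq> verts G \<and>
     (\<forall>i < length xs. adj G (xs ! i) (xs ! ((i + 1) mod length xs)))"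

definition induced_cycle_through :: "'a graph \<Rightarrow> 'a set \<Rightarrow> 'a \<Rightarrow> bool" where
  "induced_cycle_through G X w \<longleftrightarrow> (\<exists>xs. is_cycle G xs \<and> set xs \<subseteq> X \<and> w \<in> set xs)"

definition cycle_interval :: "'a graph \<Rightarrow> 'a set \<Rightarrow> 'a set" where
  "cycle_interval G S = S \<union> {w \<in> verts G - S. induced_cycle_through G (S \<union> {w}) w}"

definition cycle_convex :: "'a graph \<Rightarrow> 'a set \<Rightarrow> bool" where
  "cycle_convex G S \<longleftrightarrow> S \<subseteq> verts G \<and> cycle_interval G S = S"

definition C_cc :: "'a graph \<Rightarrow> nat" where
  "C_cc G = Max {card S | S. S \<subseteq> verts G \<and> S \<noteq> verts G \<and> cycle_convex G S}"

definition cart_prod :: "'a graph \<Rightarrow> 'b graph \<Rightarrow> ('a \<times> 'b) graph" (infixr "\<box>" 80) where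
  "cart_prod G H = (verts G \<times> verts H,
     \<lambda>(g1, h1) (g2, h2). (adj G g1 g2 \<and> h1 = h2) \<or> (g1 = g2 \<and> adj H h1 h2))"

definition complete_graph :: "nat \<Rightarrow> nat graph" where
  "complete_graph n = ({0..<n}, \<lambda>i j. i < n \<and> j < n \<and> i \<noteq> j)"

definition cycle_graph :: "nat \<Rightarrow> nat graph" where
  "cycle_graph n = ({0..<n}, \<lambda>i j. i < n \<and> j < n \<and> i \<noteq> j \<and>
                      (j = (i + 1) mod n \<or> i = (j + 1) mod n))"

definition connected_graph :: "'a graph \<Rightarrow> bool" where
  "connected_graph G \<longleftrightarrow> (\<forall>x \<in> verts G. \<forall>y \<in> verts G. (adj G)\<^sup>*\<^sup>* x y)"

definition is_tree :: "'a graph \<Rightarrow> bool" where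
  "is_tree G \<longleftrightarrow> simple_graph G \<and> verts G \<noteq> {} \<and> connected_graph G \<and> \<not> (\<exists>xs. is_cycle G xs)"

end

theory Submission
  imports Defs
begin

text \<open>
  A proper cycle convex set \<open>S\<close> of \<open>G \<box> H\<close> meets every \<open>G\<close>-layer in a cycle convex set
  of \<open>G\<close> and every \<open>H\<close>-fibre in a cycle convex set of \<open>H\<close>, and it is closed under
  completing squares, the 4-cycles alternating between edges of the two factors. By
  connectivity, a full layer together with a full fibre would force \<open>S\<close> to be everything, so
  either all layers or all fibres are proper, and \<open>|S| \<le> max (|V(H)| C\<^sub>c\<^sub>c(G)) (|V(G)| C\<^sub>c\<^sub>c(H))\<close>.

  Conversely, a vertex on a cycle has two distinct neighbours on it. So if some maximum proper
  cycle convex set \<open>B\<close> of \<open>G\<close> is sparsely attached, i.e. every vertex outside \<open>B\<close> has at most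
  one neighbour in \<open>B\<close>, then \<open>B \<times> V(H)\<close> is sparsely attached, hence cycle convex, in \<open>G \<box> H\<close>.
  Complete graphs, cycles and trees have such maxima: a single vertex, a path on all but two
  vertices, and all vertices but a leaf.
\<close>

lemma verts_pair [simp]: "verts (V, E) = V"
  by (simp add: verts_def)

lemma adj_pair [simp]: "adj (V, E) = E"
  by (simp add: adj_def)

lemma verts_cart_prod [simp]: "verts (G \<box> H) = verts G \<times> verts H"
  by (simp add: cart_prod_def)

lemma adj_cart_prod [simp]:
  "adj (G \<box> H) (g1, h1) (g2, h2) \<longleftrightarrow> adj G g1 g2 \<and> h1 = h2 \<or> g1 = g2 \<and> adj H h1 h2"
  by (simp add: cart_prod_def)

lemma simple_graphD:
  assumes "simple_graph G" "adj G x y"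
  shows "x \<in> verts G" "y \<in> verts G" "x \<noteq> y" "adj G y x"
  using assms by (auto simp: simple_graph_def)

lemma symp_adj_if_simple_graph: "simple_graph G \<Longrightarrow> symp (adj G)"
  by (auto simp: simple_graph_def intro: sympI)

text \<open>
  The product of two simple graphs need not satisfy \<^const>\<open>simple_graph\<close>: \<open>adj (G \<box> H)\<close> also
  relates pairs whose unchanged coordinate lies outside the vertex set. Only symmetry is
  inherited, and it is all that the cycle arguments need.
\<close>

lemma symp_adj_cart_prod: "symp (adj G) \<Longrightarrow> symp (adj H) \<Longrightarrow> symp (adj (G \<box> H))"
  by (auto simp: symp_def)

lemma is_cycle_neighbours:
  assumes "symp (adj G)" "is_cycle G xs" "w \<in> set xs"
  obtains u v where "u \<in> set xs - {w}" "v \<in> set xs - {w}" "u \<noteq> v" "adj G w u" "adj G w v"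
proof -
  define L where "L = length xs"
  have "L \<ge> 3" "distinct xs" and step: "\<And>i. i < L \<Longrightarrow> adj G (xs ! i) (xs ! ((i + 1) mod L))"
    using assms(2) by (auto simp: is_cycle_def L_def)
  obtain i where i: "i < L" "xs ! i = w"
    using assms(3) by (auto simp: in_set_conv_nth L_def)
  define j where "j = (if i + 1 < L then i + 1 else 0)"
  define k where "k = (if i = 0 then L - 1 else i - 1)"
  have jk: "j < L" "k < L" "j \<noteq> i" "k \<noteq> i" "j \<noteq> k" "j = (i + 1) mod L" "(k + 1) mod L = i"
    using \<open>L \<ge> 3\<close> i(1) by (auto simp: j_def k_def dest: Suc_lessI)
  then have "xs ! j \<in> set xs - {w}" "xs ! k \<in> set xs - {w}" "xs ! j \<noteq> xs ! k"
    using \<open>distinct xs\<close> i by (auto simp: L_def nth_eq_iff_index_eq)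
  moreover have "adj G w (xs ! j)" "adj G w (xs ! k)"
    using step[OF i(1)] step[OF jk(2)] jk(6,7) i(2) assms(1) by (auto dest: sympD)
  ultimately show ?thesis by (rule that)
qed

lemma is_cycle_triangle:
  assumes "distinct [a, b, c]" "{a, b, c} \<subseteq> verts G" "adj G a b" "adj G b c" "adj G c a"
  shows "is_cycle G [a, b, c]"
  unfolding is_cycle_def
proof (intro conjI allI impI)
  fix i assume "i < length [a, b, c]"
  then have "i = 0 \<or> i = 1 \<or> i = 2" by auto
  then show "adj G ([a, b, c] ! i) ([a, b, c] ! ((i + 1) mod length [a, b, c]))"
    using assms by auto
qed (use assms in auto)

lemma is_cycle_square:
  assumes "distinct [a, b, c, d]" "{a, b, c, d} \<subseteq> verts G"
    "adj G a b" "adj G b c" "adj G c d" "adj G d a"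
  shows "is_cycle G [a, b, c, d]"
  unfolding is_cycle_def
proof (intro conjI allI impI)
  fix i assume "i < length [a, b, c, d]"
  then have "i = 0 \<or> i = 1 \<or> i = 2 \<or> i = 3" by auto
  then show "adj G ([a, b, c, d] ! i) ([a, b, c, d] ! ((i + 1) mod length [a, b, c, d]))"
    using assms by auto
qed (use assms in auto)

lemma is_cycle_layer:
  assumes "is_cycle G xs" "h \<in> verts H"
  shows "is_cycle (G \<box> H) (map (\<lambda>g. (g, h)) xs)"
proof -
  have "xs \<noteq> []"
    using assms(1) by (auto simp: is_cycle_def)
  with assms show ?thesis
    by (auto simp: is_cycle_def distinct_map inj_on_def)
qed

lemma is_cycle_fiber:
  assumes "is_cycle H ys" "g \<in> verts G"
  shows "is_cycle (G \<box> H) (map (\<lambda>h. (g, h)) ys)"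
proof -
  have "ys \<noteq> []"
    using assms(1) by (auto simp: is_cycle_def)
  with assms show ?thesis
    by (auto simp: is_cycle_def distinct_map inj_on_def)
qed

lemma cycle_convexD:
  assumes "cycle_convex G S" "is_cycle G xs" "set xs \<subseteq> insert w S" "w \<in> set xs"
  shows "w \<in> S"
proof (rule ccontr)
  assume "w \<notin> S"
  moreover have "w \<in> verts G"
    using assms(2,4) by (auto simp: is_cycle_def)
  ultimately have "w \<in> cycle_interval G S"
    using assms(2-4) by (auto simp: cycle_interval_def induced_cycle_through_def)
  with \<open>w \<notin> S\<close> assms(1) show False
    by (simp add: cycle_convex_def)
qed

lemma cycle_convexI:
  assumes "S \<subseteq> verts G"
    and "\<And>w xs. w \<in> verts G \<Longrightarrow> w \<notin> S \<Longrightarrow> is_cycle G xs \<Longrightarrow> set xs \<subseteq> insert w S \<Longrightarrow>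
           w \<in> set xs \<Longrightarrow> False"
  shows "cycle_convex G S"
  using assms by (auto simp: cycle_convex_def cycle_interval_def induced_cycle_through_def)

definition sparsely_attached :: "'a graph \<Rightarrow> 'a set \<Rightarrow> bool" where
  "sparsely_attached G B \<longleftrightarrow>
     (\<forall>w \<in> verts G - B. \<forall>u \<in> B. \<forall>v \<in> B. adj G w u \<longrightarrow> adj G w v \<longrightarrow> u = v)"

lemma cycle_convex_if_sparsely_attached:
  assumes "symp (adj G)" "B \<subseteq> verts G" "sparsely_attached G B"
  shows "cycle_convex G B"
proof (rule cycle_convexI[OF assms(2)])
  fix w xs
  assume w: "w \<in> verts G" "w \<notin> B" and xs: "is_cycle G xs" "set xs \<subseteq> insert w B" "w \<in> set xs"
  obtain u v where "u \<in> set xs - {w}" "v \<in> set xs - {w}" "u \<noteq> v" "adj G w u" "adj G w v"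
    using is_cycle_neighbours[OF assms(1) xs(1,3)] .
  with w xs(2) assms(3) show False
    by (auto simp: sparsely_attached_def)
qed

lemma sparsely_attached_layers:
  "sparsely_attached G B \<Longrightarrow> sparsely_attached (G \<box> H) (B \<times> verts H)"
  by (fastforce simp: sparsely_attached_def)

lemma sparsely_attached_fibers:
  "sparsely_attached H B \<Longrightarrow> sparsely_attached (G \<box> H) (verts G \<times> B)"
  by (fastforce simp: sparsely_attached_def)

lemma finite_proper_cycle_convex_cards:
  assumes "finite (verts G)"
  shows "finite {card S | S. S \<subseteq> verts G \<and> S \<noteq> verts G \<and> cycle_convex G S}"
proof (rule finite_subset)
  show "{card S | S. S \<subseteq> verts G \<and> S \<noteq> verts G \<and> cycle_convex G S} \<subseteq> card ` Pow (verts G)"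
    by auto
qed (use assms in simp)

lemma card_le_C_cc:
  assumes "finite (verts G)" "T \<subseteq> verts G" "T \<noteq> verts G" "cycle_convex G T"
  shows "card T \<le> C_cc G"
  unfolding C_cc_def using assms finite_proper_cycle_convex_cards[OF assms(1)]
  by (auto intro: Max_ge)

lemma C_cc_eqI:
  assumes "finite (verts G)" "S \<subseteq> verts G" "S \<noteq> verts G" "cycle_convex G S" "card S = k"
    and "\<And>T. T \<subseteq> verts G \<Longrightarrow> T \<noteq> verts G \<Longrightarrow> cycle_convex G T \<Longrightarrow> card T \<le> k"
  shows "C_cc G = k"
  unfolding C_cc_def
  by (rule Max_eqI[OF finite_proper_cycle_convex_cards[OF assms(1)]]) (use assms in auto)

lemma cycle_convex_layer:
  assumes "cycle_convex (G \<box> H) S" "h \<in> verts H"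
  shows "cycle_convex G {g \<in> verts G. (g, h) \<in> S}"
proof (rule cycle_convexI)
  fix w xs assume "w \<notin> {g \<in> verts G. (g, h) \<in> S}" "w \<in> verts G" "is_cycle G xs"
    "set xs \<subseteq> insert w {g \<in> verts G. (g, h) \<in> S}" "w \<in> set xs"
  with cycle_convexD[OF assms(1) is_cycle_layer[OF _ assms(2)], of xs "(w, h)"]
  show False by auto
qed auto

lemma cycle_convex_fiber:
  assumes "cycle_convex (G \<box> H) S" "g \<in> verts G"
  shows "cycle_convex H {h \<in> verts H. (g, h) \<in> S}"
proof (rule cycle_convexI)
  fix w ys assume "w \<notin> {h \<in> verts H. (g, h) \<in> S}" "w \<in> verts H" "is_cycle H ys"
    "set ys \<subseteq> insert w {h \<in> verts H. (g, h) \<in> S}" "w \<in> set ys"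
  with cycle_convexD[OF assms(1) is_cycle_fiber[OF _ assms(2)], of ys "(g, w)"]
  show False by auto
qed auto

lemma cycle_convex_square_closed:
  assumes "simple_graph G" "simple_graph H" "cycle_convex (G \<box> H) S"
    and "adj G g g'" "adj H h h'" "(g', h) \<in> S" "(g', h') \<in> S" "(g, h') \<in> S"
  shows "(g, h) \<in> S"
proof -
  have "is_cycle (G \<box> H) [(g, h), (g', h), (g', h'), (g, h')]"
    using simple_graphD[OF assms(1,4)] simple_graphD[OF assms(2,5)] assms(4,5)
    by (intro is_cycle_square) auto
  then show ?thesis
    by (rule cycle_convexD[OF assms(3)]) (use assms(6-8) in auto)
qed

lemma cycle_convex_full_fiber_spreads:
  assumes "simple_graph G" "simple_graph H" "connected_graph H" "cycle_convex (G \<box> H) S"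
    and "\<forall>h \<in> verts H. (g', h) \<in> S" "adj G g' g" "h0 \<in> verts H" "(g, h0) \<in> S"
  shows "\<forall>h \<in> verts H. (g, h) \<in> S"
proof
  fix h assume "h \<in> verts H"
  with assms(3,7) have "(adj H)\<^sup>*\<^sup>* h0 h"
    by (simp add: connected_graph_def)
  then show "(g, h) \<in> S"
  proof (induction rule: rtranclp_induct)
    case base
    show ?case using assms(8) .
  next
    case (step h1 h2)
    show ?case
      using simple_graphD[OF assms(2) step(2)] simple_graphD[OF assms(1,6)] assms(5) step(3)
      by (intro cycle_convex_square_closed[OF assms(1,2,4), of g g' h2 h1]) auto
  qed
qed

lemma cycle_convex_full_layer_and_fiber:
  assumes "simple_graph G" "simple_graph H" "connected_graph G" "connected_graph H"
    and "cycle_convex (G \<box> H) S"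
    and "h0 \<in> verts H" "\<forall>g \<in> verts G. (g, h0) \<in> S"
    and "g0 \<in> verts G" "\<forall>h \<in> verts H. (g0, h) \<in> S"
  shows "verts G \<times> verts H \<subseteq> S"
proof clarify
  fix g h assume "g \<in> verts G" "h \<in> verts H"
  from \<open>g \<in> verts G\<close> assms(3,8) have "(adj G)\<^sup>*\<^sup>* g0 g"
    by (simp add: connected_graph_def)
  then have "\<forall>h \<in> verts H. (g, h) \<in> S"
  proof (induction rule: rtranclp_induct)
    case base
    show ?case using assms(9) .
  next
    case (step g1 g2)
    show ?case
      using simple_graphD[OF assms(1) step(2)] assms(6,7)
      by (intro cycle_convex_full_fiber_spreads[OF assms(1,2,4,5) step(3,2) assms(6)]) auto
  qed
  with \<open>h \<in> verts H\<close> show "(g, h) \<in> S" by blast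
qed

lemma card_le_mult_if_rows_le:
  assumes "finite A" "finite B" "S \<subseteq> A \<times> B" "\<And>a. a \<in> A \<Longrightarrow> card {b \<in> B. (a, b) \<in> S} \<le> k"
  shows "card S \<le> card A * k"
proof -
  have "card S = card (SIGMA a:A. {b \<in> B. (a, b) \<in> S})"
    using assms(3) by (intro arg_cong[where f = card]) auto
  also have "\<dots> = (\<Sum>a\<in>A. card {b \<in> B. (a, b) \<in> S})"
    using assms(1,2) by (simp add: card_SigmaI)
  also have "\<dots> \<le> card A * k"
    using sum_bounded_above[of A _ k] assms(4) by simp
  finally show ?thesis .
qed

lemma card_le_mult_if_columns_le:
  assumes "finite A" "finite B" "S \<subseteq> A \<times> B" "\<And>b. b \<in> B \<Longrightarrow> card {a \<in> A. (a, b) \<in> S} \<le> k"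
  shows "card S \<le> card B * k"
proof -
  have "card (prod.swap ` S) \<le> card B * k"
    using assms by (intro card_le_mult_if_rows_le) auto
  then show ?thesis
    by (simp add: card_image)
qed

lemma card_cycle_convex_cart_prod_le:
  assumes "simple_graph G" "simple_graph H" "connected_graph G" "connected_graph H"
    and "S \<subseteq> verts G \<times> verts H" "S \<noteq> verts G \<times> verts H" "cycle_convex (G \<box> H) S"
  shows "card S \<le> max (card (verts H) * C_cc G) (card (verts G) * C_cc H)"
proof -
  have fin: "finite (verts G)" "finite (verts H)"
    using assms(1,2) by (auto simp: simple_graph_def)
  consider "\<forall>h \<in> verts H. \<exists>g \<in> verts G. (g, h) \<notin> S"
    | "\<forall>g \<in> verts G. \<exists>h \<in> verts H. (g, h) \<notin> S"
    using cycle_convex_full_layer_and_fiber[OF assms(1-4,7)] assms(5,6) by blast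
  then show ?thesis
  proof cases
    case 1
    have "card {g \<in> verts G. (g, h) \<in> S} \<le> C_cc G" if "h \<in> verts H" for h
      using 1 that cycle_convex_layer[OF assms(7) that] by (intro card_le_C_cc[OF fin(1)]) auto
    then have "card S \<le> card (verts H) * C_cc G"
      by (rule card_le_mult_if_columns_le[OF fin assms(5)])
    then show ?thesis
      by simp
  next
    case 2
    have "card {h \<in> verts H. (g, h) \<in> S} \<le> C_cc H" if "g \<in> verts G" for g
      using 2 that cycle_convex_fiber[OF assms(7) that] by (intro card_le_C_cc[OF fin(2)]) auto
    then have "card S \<le> card (verts G) * C_cc H"
      by (rule card_le_mult_if_rows_le[OF fin assms(5)])
    then show ?thesis
      by simp
  qed
qed

definition has_sparse_maximum :: "'a graph \<Rightarrow> bool" where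
  "has_sparse_maximum G \<longleftrightarrow>
     (\<exists>B \<subseteq> verts G. B \<noteq> verts G \<and> sparsely_attached G B \<and> card B = C_cc G)"

theorem C_cc_cart_prod:
  assumes "simple_graph G" "simple_graph H" "connected_graph G" "connected_graph H"
    and "has_sparse_maximum G" "has_sparse_maximum H"
  shows "C_cc (G \<box> H) = max (card (verts H) * C_cc G) (card (verts G) * C_cc H)"
proof -
  obtain A where A: "A \<subseteq> verts G" "A \<noteq> verts G" "sparsely_attached G A" "card A = C_cc G"
    using assms(5) by (auto simp: has_sparse_maximum_def)
  obtain B where B: "B \<subseteq> verts H" "B \<noteq> verts H" "sparsely_attached H B" "card B = C_cc H"
    using assms(6) by (auto simp: has_sparse_maximum_def)
  have fin: "finite (verts G)" "finite (verts H)"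
    using assms(1,2) by (auto simp: simple_graph_def)
  have symp: "symp (adj (G \<box> H))"
    using assms(1,2) by (intro symp_adj_cart_prod symp_adj_if_simple_graph)
  define SA where "SA = A \<times> verts H"
  define SB where "SB = verts G \<times> B"
  obtain g h where "g \<in> verts G - A" "h \<in> verts H - B"
    using A(1,2) B(1,2) by blast
  then have proper: "SA \<noteq> verts G \<times> verts H" "SB \<noteq> verts G \<times> verts H"
    by (auto simp: SA_def SB_def)
  have "cycle_convex (G \<box> H) SA"
    unfolding SA_def using A(1,3)
    by (intro cycle_convex_if_sparsely_attached[OF symp] sparsely_attached_layers) auto
  moreover have "cycle_convex (G \<box> H) SB"
    unfolding SB_def using B(1,3)
    by (intro cycle_convex_if_sparsely_attached[OF symp] sparsely_attached_fibers) auto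
  moreover have "card SA = card (verts H) * C_cc G" "card SB = card (verts G) * C_cc H"
    using A(4) B(4) by (simp_all add: SA_def SB_def card_cartesian_product)
  moreover have "SA \<subseteq> verts G \<times> verts H" "SB \<subseteq> verts G \<times> verts H"
    using A(1) B(1) by (auto simp: SA_def SB_def)
  ultimately obtain S where "S \<subseteq> verts G \<times> verts H" "S \<noteq> verts G \<times> verts H"
    "cycle_convex (G \<box> H) S" "card S = max (card (verts H) * C_cc G) (card (verts G) * C_cc H)"
    using proper by (metis max_def)
  then show ?thesis
    using fin card_cycle_convex_cart_prod_le[OF assms(1-4)] by (intro C_cc_eqI) auto
qed

lemma has_sparse_maximumI:
  assumes "simple_graph G" "B \<subseteq> verts G" "B \<noteq> verts G" "sparsely_attached G B"
    and "\<And>T. T \<subseteq> verts G \<Longrightarrow> T \<noteq> verts G \<Longrightarrow> cycle_convex G T \<Longrightarrow> card T \<le> card B"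
  shows "C_cc G = card B" "has_sparse_maximum G"
proof -
  have "cycle_convex G B"
    using assms(1,2,4) by (intro cycle_convex_if_sparsely_attached symp_adj_if_simple_graph)
  with assms show "C_cc G = card B"
    by (intro C_cc_eqI) (auto simp: simple_graph_def)
  with assms(2-4) show "has_sparse_maximum G"
    by (auto simp: has_sparse_maximum_def)
qed

lemma connected_graph_if_reaches_all:
  assumes "symp (adj G)" "\<And>x. x \<in> verts G \<Longrightarrow> (adj G)\<^sup>*\<^sup>* v x"
  shows "connected_graph G"
  unfolding connected_graph_def
proof (intro ballI)
  fix x y assume "x \<in> verts G" "y \<in> verts G"
  then have "(adj G)\<^sup>*\<^sup>* x v" "(adj G)\<^sup>*\<^sup>* v y"
    using assms symp_rtranclp[OF assms(1)] by (auto dest: sympD)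
  then show "(adj G)\<^sup>*\<^sup>* x y"
    by (rule rtranclp_trans)
qed

lemma verts_complete_graph [simp]: "verts (complete_graph m) = {0..<m}"
  by (simp add: complete_graph_def)

lemma adj_complete_graph [simp]: "adj (complete_graph m) i j \<longleftrightarrow> i < m \<and> j < m \<and> i \<noteq> j"
  by (simp add: complete_graph_def)

lemma simple_graph_complete_graph: "simple_graph (complete_graph m)"
  by (auto simp: simple_graph_def)

lemma connected_graph_complete_graph: "connected_graph (complete_graph m)"
proof (rule connected_graph_if_reaches_all)
  show "symp (adj (complete_graph m))"
    by (auto intro: sympI)
  fix x assume "x \<in> verts (complete_graph m)"
  then show "(adj (complete_graph m))\<^sup>*\<^sup>* 0 x"
    by (cases "x = 0") auto
qed

lemma card_cycle_convex_complete_graph_le: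
  assumes "T \<subseteq> verts (complete_graph m)" "T \<noteq> verts (complete_graph m)"
    "cycle_convex (complete_graph m) T"
  shows "card T \<le> 1"
proof (rule ccontr)
  assume "\<not> card T \<le> 1"
  moreover have "finite T"
    using assms(1) finite_subset by auto
  ultimately obtain u v where "u \<in> T" "v \<in> T" "u \<noteq> v"
    by (metis One_nat_def card_le_Suc0_iff_eq)
  moreover obtain w where "w \<in> verts (complete_graph m)" "w \<notin> T"
    using assms(1,2) by blast
  ultimately have "is_cycle (complete_graph m) [w, u, v]"
    using assms(1) by (intro is_cycle_triangle) auto
  then have "w \<in> T"
    by (rule cycle_convexD[OF assms(3)]) (use \<open>u \<in> T\<close> \<open>v \<in> T\<close> in auto)
  with \<open>w \<notin> T\<close> show False ..
qed

lemma sparse_maximum_complete_graph: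
  assumes "m \<ge> 2"
  shows "C_cc (complete_graph m) = 1" "has_sparse_maximum (complete_graph m)"
proof -
  have "1 \<in> verts (complete_graph m)" "1 \<notin> {0::nat}"
    using assms by auto
  then have "{0} \<noteq> verts (complete_graph m)"
    by blast
  then show "C_cc (complete_graph m) = 1" "has_sparse_maximum (complete_graph m)"
    using has_sparse_maximumI[OF simple_graph_complete_graph, of "{0}"]
      card_cycle_convex_complete_graph_le assms
    by (auto simp: sparsely_attached_def)
qed

lemma verts_cycle_graph [simp]: "verts (cycle_graph m) = {0..<m}"
  by (simp add: cycle_graph_def)

lemma adj_cycle_graph [simp]:
  "adj (cycle_graph m) i j \<longleftrightarrow>
     i < m \<and> j < m \<and> i \<noteq> j \<and> (j = (i + 1) mod m \<or> i = (j + 1) mod m)"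
  by (simp add: cycle_graph_def)

lemma simple_graph_cycle_graph: "simple_graph (cycle_graph m)"
  by (auto simp: simple_graph_def)

lemma connected_graph_cycle_graph: "connected_graph (cycle_graph m)"
proof (rule connected_graph_if_reaches_all)
  show "symp (adj (cycle_graph m))"
    by (auto intro: sympI)
  fix x assume "x \<in> verts (cycle_graph m)"
  then show "(adj (cycle_graph m))\<^sup>*\<^sup>* 0 x"
  proof (induction x)
    case (Suc x)
    then have "adj (cycle_graph m) x (Suc x)"
      by simp
    with Suc show ?case
      by (auto intro: rtranclp.rtrancl_into_rtrancl)
  qed simp
qed

lemma is_cycle_cycle_graph:
  assumes "m \<ge> 3"
  shows "is_cycle (cycle_graph m) [0..<m]"
  unfolding is_cycle_def
proof (intro conjI allI impI)
  fix i assume "i < length [0..<m]"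
  then show "adj (cycle_graph m) ([0..<m] ! i) ([0..<m] ! ((i + 1) mod length [0..<m]))"
    using assms by (auto simp: mod_Suc)
qed (use assms in auto)

lemma card_cycle_convex_le_if_hamiltonian:
  assumes "is_cycle G xs" "set xs = verts G"
    and "T \<subseteq> verts G" "T \<noteq> verts G" "cycle_convex G T"
  shows "card T \<le> card (verts G) - 2"
proof (rule ccontr)
  assume "\<not> card T \<le> card (verts G) - 2"
  moreover have "finite (verts G)"
    using assms(2) by (metis List.finite_set)
  ultimately have "card (verts G - T) \<le> 1"
    using assms(3) by (simp add: card_Diff_subset finite_subset)
  moreover obtain w where w: "w \<in> verts G - T"
    using assms(3,4) by blast
  ultimately have "verts G - T = {w}"
    using \<open>finite (verts G)\<close> by (auto simp: card_le_Suc0_iff_eq)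
  then have "w \<in> T"
    using assms(2) by (intro cycle_convexD[OF assms(5,1)]) auto
  with w show False by blast
qed

lemma sparsely_attached_cycle_graph: "m \<ge> 3 \<Longrightarrow> sparsely_attached (cycle_graph m) {2..<m}"
  by (auto simp: sparsely_attached_def mod_Suc split: if_splits)

lemma sparse_maximum_cycle_graph:
  assumes "m \<ge> 3"
  shows "C_cc (cycle_graph m) = m - 2" "has_sparse_maximum (cycle_graph m)"
proof -
  have "0 \<in> verts (cycle_graph m)" "0 \<notin> {2..<m::nat}"
    using assms by auto
  then have "{2..<m} \<noteq> verts (cycle_graph m)"
    by blast
  moreover have "card T \<le> card {2..<m}"
    if "T \<subseteq> verts (cycle_graph m)" "T \<noteq> verts (cycle_graph m)"
      "cycle_convex (cycle_graph m) T" for T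
    using card_cycle_convex_le_if_hamiltonian[OF is_cycle_cycle_graph[OF assms] _ that] by simp
  ultimately show "C_cc (cycle_graph m) = m - 2" "has_sparse_maximum (cycle_graph m)"
    using has_sparse_maximumI[OF simple_graph_cycle_graph _ _ sparsely_attached_cycle_graph]
      assms by auto
qed

definition is_path :: "'a graph \<Rightarrow> 'a list \<Rightarrow> bool" where
  "is_path G xs \<longleftrightarrow> xs \<noteq> [] \<and> distinct xs \<and> set xs \<subseteq> verts G \<and>
     (\<forall>i. Suc i < length xs \<longrightarrow> adj G (xs ! i) (xs ! Suc i))"

lemma is_path_Cons:
  assumes "is_path G xs" "u \<in> verts G" "u \<notin> set xs" "adj G u (hd xs)"
  shows "is_path G (u # xs)"
  using assms by (auto simp: is_path_def nth_Cons hd_conv_nth split: nat.split)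

lemma is_cycle_take_if_path:
  assumes "symp (adj G)" "is_path G xs" "adj G (hd xs) (xs ! i)" "2 \<le> i" "i < length xs"
  shows "is_cycle G (take (Suc i) xs)"
  unfolding is_cycle_def
proof (intro conjI allI impI)
  fix k assume "k < length (take (Suc i) xs)"
  then have "k \<le> i"
    by simp
  show "adj G (take (Suc i) xs ! k) (take (Suc i) xs ! ((k + 1) mod length (take (Suc i) xs)))"
  proof (cases "k = i")
    case True
    then show ?thesis
      using assms by (auto simp: is_path_def hd_conv_nth dest: sympD)
  next
    case False
    with \<open>k \<le> i\<close> show ?thesis
      using assms by (auto simp: is_path_def)
  qed
qed (use assms in \<open>auto simp: is_path_def dest: in_set_takeD\<close>)

lemma longest_path_exists:
  assumes "finite (verts G)" "verts G \<noteq> {}"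
  obtains xs where "is_path G xs" "\<And>ys. is_path G ys \<Longrightarrow> length ys \<le> length xs"
proof -
  obtain x where "x \<in> verts G"
    using assms(2) by blast
  then have "is_path G [x]"
    by (simp add: is_path_def)
  moreover have "length ys < Suc (card (verts G))" if "is_path G ys" for ys
    using that assms(1) by (metis is_path_def card_mono distinct_card less_Suc_eq_le)
  ultimately show ?thesis
    using that ex_has_greatest_nat[of "is_path G" "[x]" length "Suc (card (verts G))"] by blast
qed

lemma tree_has_leaf:
  assumes "is_tree G"
  obtains l where "l \<in> verts G" "\<And>u v. adj G l u \<Longrightarrow> adj G l v \<Longrightarrow> u = v"
proof -
  have G: "simple_graph G" "verts G \<noteq> {}" "\<And>ys. \<not> is_cycle G ys"
    using assms by (auto simp: is_tree_def)
  then obtain xs where xs: "is_path G xs"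
    and longest: "\<And>ys. is_path G ys \<Longrightarrow> length ys \<le> length xs"
    using longest_path_exists by (metis simple_graph_def)
  \<comment> \<open>A neighbour of \<open>l\<close> other than its successor on the longest path \<open>xs\<close> would
    either extend \<open>xs\<close> or close a cycle with it.\<close>
  define l where "l = hd xs"
  have "l \<in> verts G"
    using xs by (auto simp: is_path_def l_def)
  moreover have "u = v" if uv: "adj G l u" "adj G l v" for u v
  proof (rule ccontr)
    assume "u \<noteq> v"
    then obtain w where w: "adj G l w" "Suc 0 < length xs \<Longrightarrow> w \<noteq> xs ! 1"
      using uv by metis
    show False
    proof (cases "w \<in> set xs")
      case False
      with xs w(1) G(1) have "is_path G (w # xs)"
        by (intro is_path_Cons) (auto simp: l_def dest: simple_graphD)
      with longest show False
        by fastforce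
    next
      case True
      then obtain i where i: "i < length xs" "xs ! i = w"
        by (auto simp: in_set_conv_nth)
      have "w \<noteq> l"
        using w(1) simple_graphD(3)[OF G(1)] by blast
      then have "i \<noteq> 0"
        using i xs by (cases i) (auto simp: l_def hd_conv_nth is_path_def)
      moreover have "i \<noteq> 1"
        using i w(2) by auto
      ultimately have "is_cycle G (take (Suc i) xs)"
        using i w(1) xs
        by (intro is_cycle_take_if_path symp_adj_if_simple_graph G(1)) (auto simp: l_def)
      with G(3) show False
        by blast
    qed
  qed
  ultimately show ?thesis
    using that by blast
qed

lemma sparse_maximum_tree:
  assumes "is_tree G"
  shows "C_cc G = card (verts G) - 1" "has_sparse_maximum G"
proof -
  obtain l where l: "l \<in> verts G" "\<And>u v. adj G l u \<Longrightarrow> adj G l v \<Longrightarrow> u = v"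
    using tree_has_leaf[OF assms] by blast
  have G: "simple_graph G" "finite (verts G)"
    using assms by (auto simp: is_tree_def simple_graph_def)
  have "sparsely_attached G (verts G - {l})"
    using l(2) by (auto simp: sparsely_attached_def)
  moreover have "card T \<le> card (verts G - {l})" if "T \<subseteq> verts G" "T \<noteq> verts G" for T
  proof -
    have "card T < card (verts G)"
      using that G(2) by (intro psubset_card_mono) auto
    with G(2) l(1) show ?thesis
      by simp
  qed
  ultimately show "C_cc G = card (verts G) - 1" "has_sparse_maximum G"
    using has_sparse_maximumI[OF G(1), of "verts G - {l}"] G(2) l(1) by auto
qed

theorem mainTheorem13:
  fixes m n :: nat and Tm :: "'a graph" and Tn :: "'b graph"
  assumes "m \<ge> 2" and "n \<ge> 2"
    and "is_tree Tm" and "card (verts Tm) = m"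
    and "is_tree Tn" and "card (verts Tn) = n"
  shows "C_cc (complete_graph m \<box> complete_graph n) = max m n
    \<and> (n \<ge> 3 \<longrightarrow> C_cc (complete_graph m \<box> cycle_graph n) = max n (m * n - 2 * m))
    \<and> C_cc (complete_graph m \<box> Tn) = max n (m * n - m)
    \<and> (m \<ge> 3 \<and> n \<ge> 3 \<longrightarrow>
          C_cc (cycle_graph m \<box> cycle_graph n) = max (m * n - 2 * n) (m * n - 2 * m))
    \<and> (m \<ge> 3 \<longrightarrow> C_cc (cycle_graph m \<box> Tn) = max (m * n - 2 * n) (m * n - m))
    \<and> C_cc (Tm \<box> Tn) = max (m * n - n) (m * n - m)"
proof -
  note K = simple_graph_complete_graph connected_graph_complete_graph sparse_maximum_complete_graph
  note C = simple_graph_cycle_graph connected_graph_cycle_graph sparse_maximum_cycle_graph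
  have Tm: "simple_graph Tm" "connected_graph Tm" "C_cc Tm = m - 1" "has_sparse_maximum Tm"
    using assms(3,4) sparse_maximum_tree[OF assms(3)] by (auto simp: is_tree_def)
  have Tn: "simple_graph Tn" "connected_graph Tn" "C_cc Tn = n - 1" "has_sparse_maximum Tn"
    using assms(5,6) sparse_maximum_tree[OF assms(5)] by (auto simp: is_tree_def)
  show ?thesis
    using assms(1,2,4,6)
    by (auto simp: C_cc_cart_prod K C Tm Tn diff_mult_distrib diff_mult_distrib2
        mult.commute max.commute)
qed

end
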